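(* The hereditary class property "nowhere dense" (the set of hereditary nowhere dense classes) is a decomposition horizon.
   Context: Graphs are finite and simple. For a graph $H$ and integer $p\ge0$, $H^{(p)}$ is obtained by replacing each edge of $H$ by a path of length $p+1$. A class $\mathscr C$ is nowhere dense if there is a function $f_\omega:\mathbb N\to\mathbb N$ such that whenever $H^{(p)}$ is a subgraph of a graph in $\mathscr C$, the clique number of $H$ is at most $f_\omega(p)$. A hereditary class is a class closed under isomorphism and induced subgraphs; a hereditary class property is a set $\Pi$ of hereditary classes closed under passing to hereditary subclasses. For non-decreasing $f$ and positive integer $p$, $\mathscr C$ has an $f$-bounded $\Pi$-decomposition with parameter $p$ if there is $\mathscr D_p\in\Pi$ such that every $G\in\mathscr C$ has a partition $V_1,\dots,V_N$ of $V(G)$, $N\le f(|G|)$, with $G[V_{i_1}\cup\dots\cup V_{i_p}]\in\mathscr D_p$ for all $i_1,\dots,i_p\in[N]$. $\Pi^\ast$ is the set of hereditary classes that, for every positive integer $p$, have such a decomposition for some non-decreasing $f$ with $f(n)=n^{o(1)}$. $\Pi$ is a decomposition horizon if $\Pi^\ast=\Pi$. *)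

theory Defs
  imports Complex_Main
begin

text \<open>Classes of graphs are sets of graphs on vertex type nat
  (every finite graph is isomorphic to one of these).\<close>

type_synonym 'v graph = "'v set \<times> 'v set set"

definition verts :: "'v graph \<Rightarrow> 'v set" where "verts G = fst G"
definition edges :: "'v graph \<Rightarrow> 'v set set" where "edges G = snd G"

definition wf_graph :: "'v graph \<Rightarrow> bool" where
  "wf_graph G \<longleftrightarrow> finite (verts G) \<and> (\<forall>e\<in>edges G. e \<subseteq> verts G \<and> card e = 2)"

definition graph_iso :: "'v graph \<Rightarrow> 'w graph \<Rightarrow> bool" where
  "graph_iso G H \<longleftrightarrow> (\<exists>f. bij_betw f (verts G) (verts H) \<and>
     (\<forall>u\<in>verts G. \<forall>v\<in>verts G. {u, v} \<in> edges G \<longleftrightarrow> {f u, f v} \<in> edges H))"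

definition subgraph :: "'v graph \<Rightarrow> 'v graph \<Rightarrow> bool" where
  "subgraph S G \<longleftrightarrow> wf_graph S \<and> verts S \<subseteq> verts G \<and> edges S \<subseteq> edges G"

definition induced :: "'v graph \<Rightarrow> 'v set \<Rightarrow> 'v graph" where
  "induced G S = (S \<inter> verts G, {e \<in> edges G. e \<subseteq> S})"

definition clique_number :: "'v graph \<Rightarrow> nat" where
  "clique_number G = Max {card K | K. K \<subseteq> verts G \<and>
      (\<forall>u\<in>K. \<forall>v\<in>K. u \<noteq> v \<longrightarrow> {u, v} \<in> edges G)}"

text \<open>The subdivision H^(p): each edge e = {a,b} (a < b) is replaced by the path
  a = node 0, Inr(e,1), ..., Inr(e,p), node (p+1) = b of length p+1.\<close>

definition sub_node :: "nat \<Rightarrow> nat set \<Rightarrow> nat \<Rightarrow> nat + (nat set \<times> nat)" where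
  "sub_node p e i = (if i = 0 then Inl (Min e) else if i = Suc p then Inl (Max e) else Inr (e, i))"

definition subdivision :: "nat \<Rightarrow> nat graph \<Rightarrow> (nat + (nat set \<times> nat)) graph" where
  "subdivision p H =
     (Inl ` verts H \<union> {Inr (e, i) | e i. e \<in> edges H \<and> i \<in> {1..p}},
      {{sub_node p e i, sub_node p e (Suc i)} | e i. e \<in> edges H \<and> i \<le> p})"

definition graph_class :: "nat graph set \<Rightarrow> bool" where
  "graph_class C \<longleftrightarrow> (\<forall>G\<in>C. wf_graph G) \<and>
     (\<forall>G G'. G \<in> C \<longrightarrow> wf_graph G' \<longrightarrow> graph_iso G G' \<longrightarrow> G' \<in> C)"

definition hereditary :: "nat graph set \<Rightarrow> bool" where
  "hereditary C \<longleftrightarrow> graph_class C \<and> (\<forall>G\<in>C. \<forall>S. induced G S \<in> C)"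

definition hereditary_property :: "nat graph set set \<Rightarrow> bool" where
  "hereditary_property \<Pi> \<longleftrightarrow> (\<forall>C\<in>\<Pi>. hereditary C) \<and>
     (\<forall>C\<in>\<Pi>. \<forall>D. hereditary D \<longrightarrow> D \<subseteq> C \<longrightarrow> D \<in> \<Pi>)"

definition nowhere_dense :: "nat graph set \<Rightarrow> bool" where
  "nowhere_dense C \<longleftrightarrow> (\<exists>f\<omega> :: nat \<Rightarrow> nat. \<forall>p H G. G \<in> C \<longrightarrow> wf_graph H \<longrightarrow>
     (\<exists>S. subgraph S G \<and> graph_iso (subdivision p H) S) \<longrightarrow> clique_number H \<le> f\<omega> p)"

text \<open>f(n) = n^{o(1)}: for every eps > 0, eventually f(n) <= n^eps.\<close>
definition subpoly :: "(nat \<Rightarrow> nat) \<Rightarrow> bool" where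
  "subpoly f \<longleftrightarrow> (\<forall>\<epsilon>::real. \<epsilon> > 0 \<longrightarrow> (\<forall>\<^sub>F n in at_top. real (f n) \<le> real n powr \<epsilon>))"

definition has_decomposition ::
  "nat graph set set \<Rightarrow> nat graph set \<Rightarrow> (nat \<Rightarrow> nat) \<Rightarrow> nat \<Rightarrow> nat graph set \<Rightarrow> bool" where
  "has_decomposition \<Pi> C f p D \<longleftrightarrow> D \<in> \<Pi> \<and>
     (\<forall>G\<in>C. \<exists>(N::nat) (V :: nat \<Rightarrow> nat set). N \<le> f (card (verts G)) \<and>
        (\<Union>i\<in>{1..N}. V i) = verts G \<and>
        (\<forall>i\<in>{1..N}. \<forall>j\<in>{1..N}. i \<noteq> j \<longrightarrow> V i \<inter> V j = {}) \<and>
        (\<forall>\<iota> :: nat \<Rightarrow> nat. (\<forall>k\<in>{1..p}. \<iota> k \<in> {1..N}) \<longrightarrow>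
            induced G (\<Union>k\<in>{1..p}. V (\<iota> k)) \<in> D))"

definition star :: "nat graph set set \<Rightarrow> nat graph set set" where
  "star \<Pi> = {C. hereditary C \<and> (\<forall>p::nat. p > 0 \<longrightarrow>
      (\<exists>f D. mono f \<and> subpoly f \<and> has_decomposition \<Pi> C f p D))}"

definition decomposition_horizon :: "nat graph set set \<Rightarrow> bool" where
  "decomposition_horizon \<Pi> \<longleftrightarrow> hereditary_property \<Pi> \<and> star \<Pi> = \<Pi>"

end

(*
  Nowhere dense classes decompose trivially into one part, and the property passes to hereditary
  subclasses.  Conversely, let C have decompositions with parameter p + 2 into a nowhere dense
  class D with n^o(1) parts, and let G in C contain the p-subdivision of a clique K of size t.
  The subdivided clique is an induced subgraph of G with at most t^2 (p + 1) vertices, so it is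
  split into N = t^o(1) parts.  Label each ordered pair (a, c) of branch vertices by the sequence
  of parts met by the path from a to c, ends included (N^(p+2) labels).  A Kovari-Sos-Turan
  double count yields m branch vertices S and m^2 further ones F such that all pairs in S x F
  carry the same label.  Routing each edge of the clique on S through its own vertex of F gives
  a (2p+1)-subdivision of K_m inside p + 2 parts, hence inside a graph of D; so t is bounded in
  terms of the clique bound of D for 2p + 1.
*)
theory Submission
  imports Defs "HOL-Library.FuncSet"
begin

lemma verts_Pair [simp]: "verts (V, E) = V"
  by (simp add: verts_def)

lemma edges_Pair [simp]: "edges (V, E) = E"
  by (simp add: edges_def)

lemma verts_induced: "verts (induced G U) = U \<inter> verts G"
  by (simp add: induced_def)

lemma edges_induced: "edges (induced G U) = {e \<in> edges G. e \<subseteq> U}"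
  by (simp add: induced_def)

lemma induced_verts: "wf_graph G \<Longrightarrow> induced G (verts G) = G"
  unfolding wf_graph_def induced_def verts_def edges_def by (cases G) auto

lemma card_doubleton_eq_2_iff: "card {x, y} = 2 \<longleftrightarrow> x \<noteq> y"
  by (auto simp: card_insert_if)

lemma card_2_eq_Min_Max:
  fixes e :: "'a :: linorder set"
  assumes "card e = 2"
  shows "e = {Min e, Max e}" and "Min e < Max e"
proof -
  obtain x y where xy: "e = {x, y}" "x \<noteq> y"
    using assms by (auto simp: card_2_iff)
  then show "e = {Min e, Max e}" and "Min e < Max e"
    by (auto simp: min_def max_def)
qed

lemma set_conv_image_nth: "set xs = (\<lambda>k. xs ! (k - 1)) ` {1..length xs}"
proof -
  have "{1..length xs} = Suc ` {0..<length xs}"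
    by (simp add: image_Suc_atLeastLessThan atLeastLessThanSuc_atLeastAtMost)
  then have "(\<lambda>k. xs ! (k - 1)) ` {1..length xs} = (!) xs ` {0..<length xs}"
    by (simp only: image_image diff_Suc_1)
  then show ?thesis
    by (simp add: nth_image)
qed

definition clique :: "'v graph \<Rightarrow> 'v set \<Rightarrow> bool" where
  "clique H K \<longleftrightarrow> K \<subseteq> verts H \<and> (\<forall>u\<in>K. \<forall>v\<in>K. u \<noteq> v \<longrightarrow> {u, v} \<in> edges H)"

lemma clique_number_eq_Max: "clique_number H = Max (card ` {K. clique H K})"
  unfolding clique_number_def clique_def by (rule arg_cong[where f = Max]) blast

lemma finite_card_cliques:
  assumes "wf_graph H"
  shows "finite (card ` {K. clique H K})"
proof -
  have "{K. clique H K} \<subseteq> Pow (verts H)"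
    by (auto simp: clique_def)
  moreover have "finite (verts H)"
    using assms by (simp add: wf_graph_def)
  ultimately show ?thesis
    by (meson finite_Pow_iff finite_imageI finite_subset)
qed

lemma card_le_clique_number:
  assumes "wf_graph H" "clique H K"
  shows "card K \<le> clique_number H"
  unfolding clique_number_eq_Max using finite_card_cliques[OF assms(1)] assms(2)
  by (intro Max_ge) auto

lemma clique_number_attained:
  assumes "wf_graph H"
  obtains K where "clique H K" "card K = clique_number H"
proof -
  have "clique H {}"
    by (simp add: clique_def)
  then have "clique_number H \<in> card ` {K. clique H K}"
    unfolding clique_number_eq_Max using finite_card_cliques[OF assms] by (intro Max_in) auto
  then show ?thesis
    using that by auto
qed

definition complete_graph :: "'v set \<Rightarrow> 'v graph" where
  "complete_graph K = (K, {e. e \<subseteq> K \<and> card e = 2})"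

lemma wf_graph_complete_graph: "finite K \<Longrightarrow> wf_graph (complete_graph K)"
  by (simp add: wf_graph_def complete_graph_def)

lemma clique_number_complete_graph:
  assumes "finite K"
  shows "card K \<le> clique_number (complete_graph K)"
  using assms by (intro card_le_clique_number wf_graph_complete_graph)
    (auto simp: clique_def complete_graph_def card_2_iff)

lemma card_edges_complete_graph:
  assumes "finite K"
  shows "card (edges (complete_graph K)) \<le> card K * card K"
proof -
  have "card (edges (complete_graph K)) = card K choose 2"
    using assms by (simp add: complete_graph_def n_subsets)
  also have "\<dots> \<le> card K ^ 2"
    by (cases "2 \<le> card K") (simp_all add: binomial_le_pow binomial_eq_0)
  finally show ?thesis
    by (simp add: power2_eq_square)
qed

lemma subgraph_complete_graph_if_clique:
  assumes "wf_graph H" "clique H K"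
  shows "subgraph (complete_graph K) H"
proof -
  have "finite K"
    using assms by (auto simp: clique_def wf_graph_def intro: finite_subset)
  moreover have "e \<in> edges H" if e: "e \<in> edges (complete_graph K)" for e
  proof -
    obtain u v where "e = {u, v}" "u \<noteq> v" "u \<in> K" "v \<in> K"
      using e by (auto simp: complete_graph_def card_2_iff)
    then show ?thesis
      using assms(2) by (simp add: clique_def)
  qed
  ultimately show ?thesis
    using assms(2) wf_graph_complete_graph[of K]
    by (auto simp: subgraph_def clique_def complete_graph_def)
qed

definition graph_embedding :: "('a \<Rightarrow> 'b) \<Rightarrow> 'a graph \<Rightarrow> 'b graph \<Rightarrow> bool" where
  "graph_embedding \<phi> X G \<longleftrightarrow>
     inj_on \<phi> (verts X) \<and> \<phi> ` verts X \<subseteq> verts G \<and> (\<forall>e\<in>edges X. \<phi> ` e \<in> edges G)"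

definition embeds :: "'a graph \<Rightarrow> 'b graph \<Rightarrow> bool" where
  "embeds X G \<longleftrightarrow> (\<exists>\<phi>. graph_embedding \<phi> X G)"

lemma embeds_if_isomorphic_subgraph:
  assumes "wf_graph X" "subgraph S G" "graph_iso X S"
  shows "embeds X G"
proof -
  obtain \<phi> where \<phi>: "bij_betw \<phi> (verts X) (verts S)"
    and adj: "\<forall>u\<in>verts X. \<forall>v\<in>verts X. {u, v} \<in> edges X \<longleftrightarrow> {\<phi> u, \<phi> v} \<in> edges S"
    using assms(3) unfolding graph_iso_def by blast
  have "\<phi> ` e \<in> edges G" if "e \<in> edges X" for e
  proof -
    have "e \<subseteq> verts X" "card e = 2"
      using assms(1) that by (auto simp: wf_graph_def)
    then obtain u v where "e = {u, v}" "u \<in> verts X" "v \<in> verts X"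
      by (auto simp: card_2_iff)
    then have "{\<phi> u, \<phi> v} \<in> edges S"
      using adj \<open>e \<in> edges X\<close> by blast
    then show ?thesis
      using assms(2) \<open>e = {u, v}\<close> by (auto simp: subgraph_def)
  qed
  moreover have "inj_on \<phi> (verts X)" "\<phi> ` verts X \<subseteq> verts G"
    using \<phi> assms(2) by (auto simp: bij_betw_def subgraph_def)
  ultimately show ?thesis
    unfolding embeds_def graph_embedding_def by blast
qed

lemma isomorphic_subgraph_if_embeds:
  assumes "wf_graph X" "embeds X G"
  obtains S where "subgraph S G" "graph_iso X S"
proof -
  obtain \<phi> where inj: "inj_on \<phi> (verts X)" and vs: "\<phi> ` verts X \<subseteq> verts G"
    and es: "\<forall>e\<in>edges X. \<phi> ` e \<in> edges G"
    using assms(2) unfolding embeds_def graph_embedding_def by blast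
  define S where "S = (\<phi> ` verts X, (\<lambda>e. \<phi> ` e) ` edges X)"
  have "card (\<phi> ` e) = 2" if "e \<in> edges X" for e
    using assms(1) that inj_on_subset[OF inj] by (auto simp: wf_graph_def card_image)
  then have "wf_graph S"
    using assms(1) unfolding S_def wf_graph_def by auto
  then have "subgraph S G"
    using vs es by (auto simp: S_def subgraph_def)
  moreover have "graph_iso X S"
    unfolding graph_iso_def
  proof (intro exI conjI ballI)
    show "bij_betw \<phi> (verts X) (verts S)"
      using inj by (simp add: S_def bij_betw_def)
    fix u v assume uv: "u \<in> verts X" "v \<in> verts X"
    show "{u, v} \<in> edges X \<longleftrightarrow> {\<phi> u, \<phi> v} \<in> edges S"
    proof
      assume "{\<phi> u, \<phi> v} \<in> edges S"
      then obtain e where e: "e \<in> edges X" "\<phi> ` {u, v} = \<phi> ` e"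
        by (auto simp: S_def)
      moreover have "e \<subseteq> verts X"
        using assms(1) e(1) by (simp add: wf_graph_def)
      moreover have "{u, v} \<subseteq> verts X"
        using uv by simp
      ultimately show "{u, v} \<in> edges X"
        using inj_on_image_eq_iff[OF inj] by metis
    qed (force simp: S_def dest: imageI[where f = "image \<phi>"])
  qed
  ultimately show ?thesis
    using that by blast
qed

lemma isomorphic_subgraph_iff_embeds:
  "wf_graph X \<Longrightarrow> (\<exists>S. subgraph S G \<and> graph_iso X S) \<longleftrightarrow> embeds X G"
  by (metis embeds_if_isomorphic_subgraph isomorphic_subgraph_if_embeds)

lemma graph_embedding_induced_image:
  assumes "graph_embedding \<phi> X G" "wf_graph X"
  shows "graph_embedding \<phi> X (induced G (\<phi> ` verts X))"
  using assms unfolding graph_embedding_def induced_def wf_graph_def by auto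

lemma embeds_induced_trans:
  assumes \<phi>: "graph_embedding \<phi> X G" and "wf_graph Y" "embeds Y (induced X W)"
    and "\<phi> ` (W \<inter> verts X) \<subseteq> U"
  shows "embeds Y (induced G U)"
proof -
  obtain \<psi> where \<psi>: "graph_embedding \<psi> Y (induced X W)"
    using assms(3) by (auto simp: embeds_def)
  then have into: "\<psi> ` verts Y \<subseteq> W \<inter> verts X"
    by (simp add: graph_embedding_def verts_induced)
  have "inj_on (\<phi> \<circ> \<psi>) (verts Y)"
    using \<psi> \<phi> into by (intro comp_inj_on) (auto simp: graph_embedding_def intro: inj_on_subset)
  moreover have "(\<phi> \<circ> \<psi>) ` verts Y \<subseteq> verts G \<inter> U"
    using image_mono[OF into, of \<phi>] \<phi> assms(4)
    unfolding image_comp[symmetric] graph_embedding_def by blast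
  moreover have "(\<phi> \<circ> \<psi>) ` e \<in> edges G \<and> (\<phi> \<circ> \<psi>) ` e \<subseteq> U" if "e \<in> edges Y" for e
  proof -
    have "e \<subseteq> verts Y"
      using that assms(2) by (simp add: wf_graph_def)
    then have "\<psi> ` e \<in> edges X" "\<psi> ` e \<subseteq> W \<inter> verts X"
      using \<psi> that into by (auto simp: graph_embedding_def edges_induced)
    then show ?thesis
      using \<phi> assms(4) unfolding image_comp[symmetric] graph_embedding_def by blast
  qed
  ultimately have "graph_embedding (\<phi> \<circ> \<psi>) Y (induced G U)"
    by (auto simp: graph_embedding_def verts_induced edges_induced)
  then show ?thesis
    by (auto simp: embeds_def)
qed

section \<open>Subdivisions\<close>

lemma verts_subdivision:
  "verts (subdivision p H) = Inl ` verts H \<union> Inr ` (edges H \<times> {1..p})"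
  by (auto simp: subdivision_def)

lemma edges_subdivision:
  "edges (subdivision p H) = {{sub_node p e i, sub_node p e (Suc i)} | e i. e \<in> edges H \<and> i \<le> p}"
  by (simp add: subdivision_def)

lemma sub_node_in_verts:
  assumes "wf_graph H" "e \<in> edges H" "i \<le> Suc p"
  shows "sub_node p e i \<in> verts (subdivision p H)"
proof -
  have "Min e \<in> verts H" "Max e \<in> verts H"
    using assms card_2_eq_Min_Max[of e] by (auto simp: wf_graph_def)
  then show ?thesis
    using assms(2,3) by (auto simp: sub_node_def verts_subdivision)
qed

lemma sub_node_edge:
  "e \<in> edges H \<Longrightarrow> i \<le> p \<Longrightarrow> {sub_node p e i, sub_node p e (Suc i)} \<in> edges (subdivision p H)"
  by (auto simp: edges_subdivision)

lemma wf_graph_subdivision: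
  assumes "wf_graph H"
  shows "wf_graph (subdivision p H)"
proof -
  have "finite (edges H)"
    using assms by (auto simp: wf_graph_def intro: finite_subset[of _ "Pow (verts H)"])
  then have "finite (verts (subdivision p H))"
    using assms by (simp add: verts_subdivision wf_graph_def)
  moreover have "f \<subseteq> verts (subdivision p H) \<and> card f = 2" if "f \<in> edges (subdivision p H)" for f
  proof -
    obtain e i where f: "f = {sub_node p e i, sub_node p e (Suc i)}" "e \<in> edges H" "i \<le> p"
      using \<open>f \<in> edges (subdivision p H)\<close> by (auto simp: edges_subdivision)
    have "Min e < Max e"
      using assms f(2) card_2_eq_Min_Max[of e] by (auto simp: wf_graph_def)
    then have "sub_node p e i \<noteq> sub_node p e (Suc i)"
      by (auto simp: sub_node_def)
    then show ?thesis
      using f sub_node_in_verts[OF assms f(2)] by auto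
  qed
  ultimately show ?thesis
    by (simp add: wf_graph_def)
qed

lemma card_verts_subdivision:
  assumes "wf_graph H"
  shows "card (verts (subdivision p H)) = card (verts H) + card (edges H) * p"
proof -
  have "finite (verts H)" "finite (edges H)"
    using assms by (auto simp: wf_graph_def intro: finite_subset[of _ "Pow (verts H)"])
  then have "card (Inl ` verts H \<union> Inr ` (edges H \<times> {1..p}))
      = card (Inl ` verts H :: (nat + nat set \<times> nat) set) + card (Inr ` (edges H \<times> {1..p}) :: (nat + nat set \<times> nat) set)"
    by (intro card_Un_disjoint) auto
  then show ?thesis
    by (simp add: verts_subdivision card_image card_cartesian_product)
qed

lemma embeds_subdivision_of_subgraph:
  assumes "subgraph H' H" "embeds (subdivision p H) G"
  shows "embeds (subdivision p H') G"
proof -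
  obtain \<phi> where \<phi>: "graph_embedding \<phi> (subdivision p H) G"
    using assms(2) by (auto simp: embeds_def)
  have "verts (subdivision p H') \<subseteq> verts (subdivision p H)"
    "edges (subdivision p H') \<subseteq> edges (subdivision p H)"
    using assms(1) by (auto simp: subgraph_def verts_subdivision edges_subdivision)
  then have "graph_embedding \<phi> (subdivision p H') G"
    using \<phi> by (auto simp: graph_embedding_def intro: inj_on_subset)
  then show ?thesis
    by (auto simp: embeds_def)
qed

lemma embeds_subdivision_if_paths:
  fixes H :: "nat graph" and G :: "'v graph"
    and b :: "nat \<Rightarrow> 'v" and P :: "nat set \<Rightarrow> nat \<Rightarrow> 'v"
  assumes "wf_graph H"
    and "inj_on b (verts H)" "b ` verts H \<subseteq> verts G"
    and ends: "\<And>e. e \<in> edges H \<Longrightarrow> P e 0 = b (Min e) \<and> P e (Suc q) = b (Max e)"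
    and steps: "\<And>e i. e \<in> edges H \<Longrightarrow> i \<le> q \<Longrightarrow> {P e i, P e (Suc i)} \<in> edges G"
    and inner_verts: "\<And>e i. e \<in> edges H \<Longrightarrow> i \<in> {1..q} \<Longrightarrow> P e i \<in> verts G - b ` verts H"
    and inner_inj: "inj_on (\<lambda>(e, i). P e i) (edges H \<times> {1..q})"
  shows "embeds (subdivision q H) G"
proof -
  define \<psi> where "\<psi> v = (case v of Inl x \<Rightarrow> b x | Inr (e, i) \<Rightarrow> P e i)" for v
  have \<psi>_sub_node: "\<psi> (sub_node q e i) = P e i" if "e \<in> edges H" "i \<le> Suc q" for e i
    using that ends[OF that(1)] by (auto simp: \<psi>_def sub_node_def)
  have Inl_image: "\<psi> ` Inl ` A = b ` A" for A
    by (simp add: image_image \<psi>_def)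
  have Inr_image: "\<psi> ` Inr ` A = (\<lambda>(e, i). P e i) ` A" for A
    by (simp add: image_image \<psi>_def split_def)
  have "inj_on \<psi> (Inl ` verts H)"
    using assms(2) by (intro inj_on_imageI) (simp add: \<psi>_def comp_def)
  moreover have "inj_on \<psi> (Inr ` (edges H \<times> {1..q}))"
    using inner_inj by (intro inj_on_imageI) (simp add: \<psi>_def comp_def split_def)
  moreover have "\<psi> ` Inl ` verts H \<inter> \<psi> ` Inr ` (edges H \<times> {1..q}) = {}"
    unfolding Inl_image Inr_image using inner_verts by (auto simp del: atLeastAtMost_iff) (metis imageI)
  ultimately have "inj_on \<psi> (verts (subdivision q H))"
    unfolding verts_subdivision inj_on_Un by blast
  moreover have "\<psi> ` verts (subdivision q H) \<subseteq> verts G"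
    unfolding verts_subdivision image_Un Inl_image Inr_image
    using assms(3) inner_verts by fastforce
  moreover have "\<psi> ` f \<in> edges G" if "f \<in> edges (subdivision q H)" for f
    using that steps by (auto simp: edges_subdivision \<psi>_sub_node)
  ultimately show ?thesis
    unfolding embeds_def graph_embedding_def by blast
qed

lemma nowhere_dense_iff_embeds:
  "nowhere_dense C \<longleftrightarrow> (\<exists>f\<omega>. \<forall>p H G. G \<in> C \<longrightarrow> wf_graph H \<longrightarrow>
     embeds (subdivision p H) G \<longrightarrow> clique_number H \<le> f\<omega> p)"
  unfolding nowhere_dense_def
  by (metis isomorphic_subgraph_iff_embeds wf_graph_subdivision)

definition subdivision_path :: "nat \<Rightarrow> nat \<Rightarrow> nat \<Rightarrow> nat \<Rightarrow> nat + nat set \<times> nat" where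
  "subdivision_path p x y k = sub_node p {x, y} (if x < y then k else Suc p - k)"

lemma subdivision_path_0 [simp]: "x \<noteq> y \<Longrightarrow> subdivision_path p x y 0 = Inl x"
  by (auto simp: subdivision_path_def sub_node_def min_def max_def)

lemma subdivision_path_Suc [simp]: "x \<noteq> y \<Longrightarrow> subdivision_path p x y (Suc p) = Inl y"
  by (auto simp: subdivision_path_def sub_node_def min_def max_def)

lemma subdivision_path_inner:
  "0 < k \<Longrightarrow> k \<le> p \<Longrightarrow> subdivision_path p x y k = Inr ({x, y}, if x < y then k else Suc p - k)"
  by (auto simp: subdivision_path_def sub_node_def)

lemma subdivision_path_swap:
  "x \<noteq> y \<Longrightarrow> k \<le> Suc p \<Longrightarrow> subdivision_path p y x k = subdivision_path p x y (Suc p - k)"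
  by (cases x y rule: linorder_cases) (auto simp: subdivision_path_def insert_commute)

lemma subdivision_path_in_verts:
  assumes "wf_graph H" "{x, y} \<in> edges H" "k \<le> Suc p"
  shows "subdivision_path p x y k \<in> verts (subdivision p H)"
  unfolding subdivision_path_def using assms by (intro sub_node_in_verts) auto

lemma subdivision_path_edge:
  assumes "{x, y} \<in> edges H" "k \<le> p"
  shows "{subdivision_path p x y k, subdivision_path p x y (Suc k)} \<in> edges (subdivision p H)"
proof (cases "x < y")
  case True
  then show ?thesis
    using sub_node_edge[OF assms] by (simp add: subdivision_path_def)
next
  case False
  have "Suc p - Suc k = p - k" "Suc p - k = Suc (p - k)"
    using assms(2) by auto
  then show ?thesis
    using False sub_node_edge[OF assms(1), of "p - k"]
    by (simp add: subdivision_path_def insert_commute)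
qed

section \<open>Routing subdivided edges through midpoints\<close>

(* One subdivided edge of a (2p+1)-subdivision: the paths of the p-subdivision from Min e to
   mid e and from mid e to Max e, glued at mid e. *)
definition path_via :: "nat \<Rightarrow> (nat set \<Rightarrow> nat) \<Rightarrow> nat set \<Rightarrow> nat \<Rightarrow> nat + nat set \<times> nat" where
  "path_via p mid e k =
     (if k \<le> Suc p then subdivision_path p (Min e) (mid e) k
      else subdivision_path p (mid e) (Max e) (k - Suc p))"

definition paths_between :: "nat \<Rightarrow> nat set \<Rightarrow> nat set \<Rightarrow> (nat + nat set \<times> nat) set" where
  "paths_between p S F = {subdivision_path p a c k | a c k. a \<in> S \<and> c \<in> F \<and> k \<le> Suc p}"

locale midpoint_routing =
  fixes K S F :: "nat set" and mid :: "nat set \<Rightarrow> nat"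
  assumes finite_K: "finite K" and subsets: "S \<subseteq> K" "F \<subseteq> K" and disjoint: "S \<inter> F = {}"
    and mid: "inj_on mid (edges (complete_graph S))" "mid ` edges (complete_graph S) \<subseteq> F"
begin

lemma edge_ends:
  assumes "e \<in> edges (complete_graph S)"
  shows "Min e \<in> S" "Max e \<in> S" "Min e < Max e" "mid e \<in> F" "Min e \<noteq> mid e" "mid e \<noteq> Max e"
proof -
  have "card e = 2" "e \<subseteq> S"
    using assms by (simp_all add: complete_graph_def)
  then show "Min e \<in> S" "Max e \<in> S" "Min e < Max e"
    using card_2_eq_Min_Max[of e] by auto
  moreover show "mid e \<in> F"
    using mid(2) assms by blast
  ultimately show "Min e \<noteq> mid e" "mid e \<noteq> Max e"
    using disjoint by auto
qed

lemma halves_in_edges: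
  assumes "e \<in> edges (complete_graph S)"
  shows "{Min e, mid e} \<in> edges (complete_graph K)" "{mid e, Max e} \<in> edges (complete_graph K)"
  using edge_ends[OF assms] subsets by (auto simp: complete_graph_def card_doubleton_eq_2_iff)

lemma path_via_inner:
  assumes "e \<in> edges (complete_graph S)" "k \<in> {1..2*p+1}"
  shows "path_via p mid e k =
    (if k \<le> p then Inr ({Min e, mid e}, if Min e < mid e then k else Suc p - k)
     else if k = Suc p then Inl (mid e)
     else Inr ({mid e, Max e}, if mid e < Max e then k - Suc p else Suc p - (k - Suc p)))"
  using assms(2) edge_ends[OF assms(1)] by (auto simp: path_via_def subdivision_path_inner)

lemma path_via_not_branch:
  assumes "e \<in> edges (complete_graph S)" "k \<in> {1..2*p+1}"
  shows "path_via p mid e k \<notin> Inl ` S"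
  using path_via_inner[OF assms] edge_ends[OF assms(1)] disjoint by auto

lemma inj_on_path_via:
  "inj_on (\<lambda>(e, k). path_via p mid e k) (edges (complete_graph S) \<times> {1..2*p+1})"
proof (rule inj_onI, clarify)
  fix e k e' k'
  assume e: "e \<in> edges (complete_graph S)" "k \<in> {1..2*p+1}"
    and e': "e' \<in> edges (complete_graph S)" "k' \<in> {1..2*p+1}"
    and eq: "path_via p mid e k = path_via p mid e' k'"
  note ends = edge_ends[OF e(1)] edge_ends[OF e'(1)]
  have "mid e = mid e'"
    using eq ends disjoint unfolding path_via_inner[OF e] path_via_inner[OF e']
    by (auto split: if_splits simp: doubleton_eq_iff)
  then have "e = e'"
    using mid(1) e e' by (auto dest: inj_onD)
  then show "e = e' \<and> k = k'"
    using eq ends disjoint e(2) e'(2) unfolding path_via_inner[OF e] path_via_inner[OF e']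
    by (auto split: if_splits simp: doubleton_eq_iff)
qed

lemma path_via_in_verts:
  assumes "e \<in> edges (complete_graph S)" "k \<le> 2*p+2"
  shows "path_via p mid e k \<in> verts (subdivision p (complete_graph K))"
  using halves_in_edges[OF assms(1)] wf_graph_complete_graph[OF finite_K] assms(2)
  by (auto simp: path_via_def intro!: subdivision_path_in_verts)

lemma path_via_edge:
  assumes "e \<in> edges (complete_graph S)" "k \<le> 2*p+1"
  shows "{path_via p mid e k, path_via p mid e (Suc k)} \<in> edges (subdivision p (complete_graph K))"
proof (cases "k \<le> p")
  case True
  then show ?thesis
    using subdivision_path_edge[OF halves_in_edges(1)[OF assms(1)]] by (simp add: path_via_def)
next
  case False
  then have "path_via p mid e k = subdivision_path p (mid e) (Max e) (k - Suc p)"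
    using edge_ends[OF assms(1)] by (auto simp: path_via_def le_Suc_eq)
  moreover have "path_via p mid e (Suc k) = subdivision_path p (mid e) (Max e) (Suc (k - Suc p))"
    using False by (simp add: path_via_def Suc_diff_Suc)
  ultimately show ?thesis
    using subdivision_path_edge[OF halves_in_edges(2)[OF assms(1)]] False assms(2) by simp
qed

lemma path_via_in_paths_between:
  assumes "e \<in> edges (complete_graph S)" "k \<le> 2*p+2"
  shows "path_via p mid e k \<in> paths_between p S F"
proof (cases "k \<le> Suc p")
  case True
  then show ?thesis
    using edge_ends[OF assms(1)] by (auto simp: path_via_def paths_between_def)
next
  case False
  then have "path_via p mid e k = subdivision_path p (Max e) (mid e) (Suc p - (k - Suc p))"
    using assms(2) edge_ends[OF assms(1)] subdivision_path_swap[of "Max e" "mid e" "k - Suc p" p]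
    by (simp add: path_via_def)
  then show ?thesis
    using edge_ends[OF assms(1)] unfolding paths_between_def by fastforce
qed

end

lemma embeds_subdivided_clique_in_paths_between:
  assumes "finite K" "S \<subseteq> K" "F \<subseteq> K" "S \<inter> F = {}" "card S * card S \<le> card F"
  shows "embeds (subdivision (2*p+1) (complete_graph S))
    (induced (subdivision p (complete_graph K)) (paths_between p S F))"
proof -
  let ?E = "edges (complete_graph S)" and ?X = "subdivision p (complete_graph K)"
  have "finite S" "finite F"
    using assms(1-3) by (auto intro: finite_subset)
  then obtain mid where "mid ` ?E \<subseteq> F" "inj_on mid ?E"
    using card_le_inj[of ?E F] card_edges_complete_graph[of S] assms(5)
    by (auto simp: complete_graph_def)
  then interpret midpoint_routing K S F mid
    using assms(1-4) by unfold_locales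
  show ?thesis
  proof (rule embeds_subdivision_if_paths)
    show "wf_graph (complete_graph S)"
      using \<open>finite S\<close> by (rule wf_graph_complete_graph)
    show "inj_on Inl (verts (complete_graph S))"
      by (simp add: inj_on_def)
    have "Inl s \<in> paths_between p S F" if s: "s \<in> S" for s
    proof -
      have "card S \<noteq> 0"
        using s \<open>finite S\<close> by auto
      then obtain c where "c \<in> F"
        using assms(5) by fastforce
      then show ?thesis
        using s disjoint subdivision_path_0[of s c p, symmetric] unfolding paths_between_def by blast
    qed
    then show "Inl ` verts (complete_graph S) \<subseteq> verts (induced ?X (paths_between p S F))"
      using subsets by (auto simp: verts_induced verts_subdivision complete_graph_def)
    fix e assume e: "e \<in> ?E"
    show "path_via p mid e 0 = Inl (Min e) \<and> path_via p mid e (Suc (2*p+1)) = Inl (Max e)"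
      using edge_ends[OF e] by (simp add: path_via_def)
    show "{path_via p mid e i, path_via p mid e (Suc i)} \<in> edges (induced ?X (paths_between p S F))"
      if "i \<le> 2*p+1" for i
      using path_via_edge[OF e that] path_via_in_paths_between[OF e] that
      by (simp add: edges_induced)
    show "path_via p mid e i \<in> verts (induced ?X (paths_between p S F)) - Inl ` verts (complete_graph S)"
      if "i \<in> {1..2*p+1}" for i
      using path_via_in_verts[OF e] path_via_in_paths_between[OF e] path_via_not_branch[OF e that] that
      by (simp add: verts_induced complete_graph_def)
  qed (rule inj_on_path_via)
qed

section \<open>Counting\<close>

lemma pow_le_binomial_mult_pow:
  assumes "m \<le> d"
  shows "d ^ m \<le> (d choose m) * m ^ m"
proof (cases "m = 0")
  case False
  have "real d ^ m = (real d / real m) ^ m * real m ^ m"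
    using False by (simp add: power_divide)
  also have "\<dots> \<le> real (d choose m) * real m ^ m"
    using binomial_ge_n_over_k_pow_k[OF assms] by (intro mult_right_mono) auto
  finally show ?thesis
    by (simp flip: of_nat_power of_nat_mult)
qed simp

lemma many_sets_contain_common_subset:
  fixes N :: "'c \<Rightarrow> 'a set"
  assumes "finite A" "finite C" "\<And>c. c \<in> C \<Longrightarrow> N c \<subseteq> A"
    and "L * card A ^ m < (\<Sum>c\<in>C. card (N c) choose m)"
  obtains S where "S \<subseteq> A" "card S = m" "L < card {c\<in>C. S \<subseteq> N c}"
proof -
  define SS where "SS = {S. S \<subseteq> A \<and> card S = m}"
  have "finite SS"
    using assms(1) by (simp add: SS_def)
  have "(\<Sum>c\<in>C. card (N c) choose m) = (\<Sum>c\<in>C. card {S\<in>SS. S \<subseteq> N c})"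
  proof (intro sum.cong refl)
    fix c assume "c \<in> C"
    then have "{S\<in>SS. S \<subseteq> N c} = {S. S \<subseteq> N c \<and> card S = m}"
      using assms(3) by (auto simp: SS_def)
    then show "card (N c) choose m = card {S\<in>SS. S \<subseteq> N c}"
      using finite_subset[OF assms(3)[OF \<open>c \<in> C\<close>] assms(1)] by (simp add: n_subsets)
  qed
  also have "\<dots> = (\<Sum>S\<in>SS. card {c\<in>C. S \<subseteq> N c})"
    using sum.swap_restrict[OF assms(2) \<open>finite SS\<close>, of "\<lambda>_ _. 1::nat" "\<lambda>c S. S \<subseteq> N c"]
    by simp
  finally have count: "(\<Sum>S\<in>SS. card {c\<in>C. S \<subseteq> N c}) = (\<Sum>c\<in>C. card (N c) choose m)" ..
  have "\<not> (\<forall>S\<in>SS. card {c\<in>C. S \<subseteq> N c} \<le> L)"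
  proof
    assume "\<forall>S\<in>SS. card {c\<in>C. S \<subseteq> N c} \<le> L"
    then have "(\<Sum>S\<in>SS. card {c\<in>C. S \<subseteq> N c}) \<le> L * (card A choose m)"
      using sum_mono[of SS "\<lambda>S. card {c\<in>C. S \<subseteq> N c}" "\<lambda>_. L"] assms(1)
      by (simp add: SS_def n_subsets mult.commute)
    also have "\<dots> \<le> L * card A ^ m"
      by (cases "m \<le> card A") (simp_all add: binomial_le_pow binomial_eq_0)
    finally show False
      using count assms(4) by simp
  qed
  then show ?thesis
    using that by (auto simp: SS_def not_le)
qed

lemma pow_le_binomial_mult:
  fixes a d X m :: nat
  assumes "a - 1 \<le> d * X" "2 * m * X < a" "1 \<le> m" "1 \<le> X"
  shows "a^m \<le> (d choose m) * (2*X*m)^m"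
proof -
  have "1 \<le> m * X"
    using assms(3,4) by simp
  then have "2 \<le> a"
    using assms(2) unfolding mult.assoc by linarith
  then have "a \<le> 2 * (a - 1)"
    by simp
  also have "\<dots> \<le> 2 * X * d"
    using assms(1) by (simp add: mult_ac)
  finally have "a \<le> 2 * X * d" .
  moreover from this have "2 * X * m < 2 * X * d"
    using assms(2) by (simp only: mult_ac)
  then have "m \<le> d"
    by simp
  ultimately have "a^m \<le> (2*X)^m * d^m"
    by (metis power_mono power_mult_distrib zero_le)
  also have "\<dots> \<le> (2*X)^m * ((d choose m) * m^m)"
    using pow_le_binomial_mult_pow[OF \<open>m \<le> d\<close>] by simp
  finally show ?thesis
    by (simp add: power_mult_distrib mult_ac)
qed

lemma sum_binomial_lower_bound:
  fixes d :: "'c \<Rightarrow> nat"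
  assumes "finite C" "a \<le> card C * X" "\<And>c. c \<in> C \<Longrightarrow> a - 1 \<le> d c * X"
    and "1 \<le> m" "1 \<le> L" "L * (2*m)^m * X^(m+1) < a"
  shows "L * a^m < (\<Sum>c\<in>C. d c choose m)"
proof (rule ccontr)
  assume "\<not> ?thesis"
  then have sum_le: "(\<Sum>c\<in>C. d c choose m) \<le> L * a^m"
    by simp
  have "X \<noteq> 0"
    using assms(2,6) by (intro notI) simp
  have "2*m \<le> (2*m)^m" "X \<le> X^(m+1)"
    using assms(4) \<open>X \<noteq> 0\<close> by (intro self_le_power; simp)+
  then have "2*m*X \<le> L * (2*m)^m * X^(m+1)"
    using assms(5) by (metis mult_le_mono mult_1)
  then have large: "2*m*X < a"
    using assms(6) by linarith
  have "a^m \<le> (d c choose m) * (2*X*m)^m" if "c \<in> C" for c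
    using pow_le_binomial_mult[OF assms(3)[OF that] large assms(4)] \<open>X \<noteq> 0\<close> by simp
  then have "card C * a^m \<le> (\<Sum>c\<in>C. d c choose m) * (2*X*m)^m"
    using sum_mono[of C "\<lambda>_. a^m" "\<lambda>c. (d c choose m) * (2*X*m)^m"]
    by (simp add: sum_distrib_right)
  have "a * a^m \<le> X * (card C * a^m)"
    using assms(2) by (simp add: mult_ac)
  also have "\<dots> \<le> X * ((\<Sum>c\<in>C. d c choose m) * (2*X*m)^m)"
    using \<open>card C * a^m \<le> (\<Sum>c\<in>C. d c choose m) * (2*X*m)^m\<close> by simp
  also have "\<dots> \<le> X * (L * a^m * (2*X*m)^m)"
    using sum_le by simp
  also have "\<dots> = (L * (2*m)^m * X^(m+1)) * a^m"
    by (simp add: power_mult_distrib mult_ac)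
  finally have "a \<le> L * (2*m)^m * X^(m+1)"
    using large by simp
  then show False
    using assms(6) by simp
qed

lemma monochromatic_biclique:
  fixes pat :: "'a \<Rightarrow> 'a \<Rightarrow> 'c"
  assumes "finite A" "finite P" "P \<noteq> {}"
    and pat: "\<And>a c. a \<in> A \<Longrightarrow> c \<in> A \<Longrightarrow> a \<noteq> c \<Longrightarrow> pat a c \<in> P"
    and "1 \<le> m" "1 \<le> L" "L * (2*m)^m * card P ^ (m+1) < card A"
  obtains S F \<sigma> where "S \<subseteq> A" "F \<subseteq> A" "S \<inter> F = {}" "card S = m" "L < card F"
    "\<And>a c. a \<in> S \<Longrightarrow> c \<in> F \<Longrightarrow> pat a c = \<sigma>"
proof -
  have "\<exists>\<sigma>\<in>P. card (A - {c}) \<le> card ((\<lambda>a. pat a c) -` {\<sigma>} \<inter> (A - {c})) * card P"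
    if "c \<in> A" for c
    using that assms(1-3) pat by (intro pigeonhole_card) auto
  then obtain \<sigma>c where \<sigma>c: "\<And>c. c \<in> A \<Longrightarrow> \<sigma>c c \<in> P \<and>
      card (A - {c}) \<le> card ((\<lambda>a. pat a c) -` {\<sigma>c c} \<inter> (A - {c})) * card P"
    by metis
  obtain \<sigma> where "\<sigma> \<in> P" and \<sigma>: "card A \<le> card (\<sigma>c -` {\<sigma>} \<inter> A) * card P"
    using pigeonhole_card[of \<sigma>c A P] \<sigma>c assms(1-3) by auto
  define C where "C = \<sigma>c -` {\<sigma>} \<inter> A"
  define N where "N c = {a \<in> A - {c}. pat a c = \<sigma>}" for c
  have N_eq: "N c = (\<lambda>a. pat a c) -` {\<sigma>c c} \<inter> (A - {c})" if "c \<in> C" for c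
    using that by (auto simp: N_def C_def)
  have "L * card A ^ m < (\<Sum>c\<in>C. card (N c) choose m)"
  proof (rule sum_binomial_lower_bound)
    show "card A \<le> card C * card P"
      using \<sigma> by (simp add: C_def)
    show "card A - 1 \<le> card (N c) * card P" if "c \<in> C" for c
      using \<sigma>c[of c] that assms(1) by (auto simp: N_eq C_def)
  qed (use assms(1,5-7) in \<open>auto simp: C_def\<close>)
  then obtain S where S: "S \<subseteq> A" "card S = m" "L < card {c\<in>C. S \<subseteq> N c}"
    using many_sets_contain_common_subset[of A C N L m] assms(1) by (auto simp: C_def N_def)
  show ?thesis
  proof (rule that)
    show "S \<subseteq> A" "card S = m" "L < card {c\<in>C. S \<subseteq> N c}"
      by (fact S)+
    show "{c\<in>C. S \<subseteq> N c} \<subseteq> A" "S \<inter> {c\<in>C. S \<subseteq> N c} = {}"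
      by (auto simp: C_def N_def)
    show "pat a c = \<sigma>" if "a \<in> S" "c \<in> {c\<in>C. S \<subseteq> N c}" for a c
      using that by (auto simp: N_def)
  qed
qed

lemma mult_pow_less_if_powr_bound:
  fixes N n t c E p :: nat
  assumes "real N \<le> real n powr (1 / (3 * real E))" "0 < E" "0 < n"
    and "n \<le> t * t * (p + 1)" "c^3 * (p + 1) < t"
  shows "c * N^E < t"
proof (rule ccontr)
  assume "\<not> c * N^E < t"
  have "real N ^ (3 * E) \<le> (real n powr (1 / (3 * real E))) ^ (3 * E)"
    using assms(1) by (intro power_mono) auto
  also have "\<dots> = real n"
    using assms(2,3) by (simp add: powr_power)
  finally have "N^(3*E) \<le> n"
    by (simp flip: of_nat_power)
  have "t^3 \<le> (c * N^E)^3"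
    using \<open>\<not> c * N^E < t\<close> by (intro power_mono) auto
  also have "\<dots> = c^3 * N^(3*E)"
    by (simp add: power_mult_distrib power_mult mult.commute)
  also have "\<dots> \<le> c^3 * (t * t * (p + 1))"
    using \<open>N^(3*E) \<le> n\<close> assms(4) by (intro mult_le_mono2) (rule le_trans)
  also have "\<dots> = (c^3 * (p + 1)) * (t * t)"
    by (simp only: mult_ac)
  finally have "t * (t * t) \<le> (c^3 * (p + 1)) * (t * t)"
    by (simp only: power3_eq_cube mult.assoc)
  moreover have "0 < t * t"
    using assms(5) by simp
  ultimately have "t \<le> c^3 * (p + 1)"
    by (meson mult_le_cancel2)
  then show False
    using assms(5) by simp
qed

lemma mult_pow_less_if_subpoly:
  assumes "subpoly f" "0 < E"
  obtains n0 where "\<And>n t N. n0 \<le> n \<Longrightarrow> n \<le> t * t * (p + 1) \<Longrightarrow> c^3 * (p + 1) < t \<Longrightarrow> N \<le> f n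
    \<Longrightarrow> c * N^E < t"
proof -
  have "1 / (3 * real E) > 0"
    using assms(2) by simp
  then obtain n0 where n0: "\<And>n. n \<ge> n0 \<Longrightarrow> real (f n) \<le> real n powr (1 / (3 * real E))"
    using assms(1) unfolding subpoly_def eventually_at_top_linorder by blast
  show ?thesis
  proof (rule that[of "Suc n0"])
    fix n t N assume "Suc n0 \<le> n" "n \<le> t * t * (p + 1)" "c^3 * (p + 1) < t" "N \<le> f n"
    then show "c * N^E < t"
      using n0[of n] assms(2) by (intro mult_pow_less_if_powr_bound) auto
  qed
qed

section \<open>Decompositions of classes containing subdivided cliques\<close>

lemma monochromatic_paths:
  fixes col :: "nat + nat set \<times> nat \<Rightarrow> nat"
  assumes "finite K" "1 \<le> m" "m * m * (2*m)^m * N^((p+2)*(m+1)) < card K"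
    and col: "\<And>v. v \<in> verts (subdivision p (complete_graph K)) \<Longrightarrow> col v \<in> {1..N}"
  obtains \<sigma> S F where "set \<sigma> \<subseteq> {1..N}" "length \<sigma> = p+2"
    "S \<subseteq> K" "F \<subseteq> K" "S \<inter> F = {}" "card S = m" "m * m < card F"
    "\<And>a c k. a \<in> S \<Longrightarrow> c \<in> F \<Longrightarrow> k \<le> Suc p \<Longrightarrow> col (subdivision_path p a c k) = \<sigma> ! k"
proof -
  define pat where "pat a c = map (\<lambda>k. col (subdivision_path p a c k)) [0..<p+2]" for a c
  define P where "P = {xs. set xs \<subseteq> {1..N} \<and> length xs = p+2}"
  have pat_P: "pat a c \<in> P" if "a \<in> K" "c \<in> K" "a \<noteq> c" for a c
  proof -
    have "{a, c} \<in> edges (complete_graph K)"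
      using that by (simp add: complete_graph_def card_doubleton_eq_2_iff)
    then have "\<forall>k<p+2. col (subdivision_path p a c k) \<in> {1..N}"
      using col subdivision_path_in_verts[OF wf_graph_complete_graph[OF assms(1)]]
      by (simp add: less_Suc_eq_le)
    then show ?thesis
      by (simp add: pat_def P_def image_subset_iff del: upt_Suc atLeastAtMost_iff)
  qed
  obtain x where "x \<in> K"
    using assms(3) by fastforce
  then have "1 \<le> N"
    using col[of "Inl x"] by (simp add: verts_subdivision complete_graph_def)
  then have "replicate (p+2) 1 \<in> P"
    by (auto simp: P_def simp del: replicate.simps)
  then have "P \<noteq> {}"
    by blast
  have "finite P" "card P = N^(p+2)"
    by (simp_all add: P_def finite_lists_length_eq card_lists_length_eq)
  then have bound: "m * m * (2*m)^m * card P ^ (m+1) < card K"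
    using assms(3) by (simp only: power_mult)
  obtain S F \<sigma> where SF: "S \<subseteq> K" "F \<subseteq> K" "S \<inter> F = {}" "card S = m" "m * m < card F"
    and \<sigma>: "\<And>a c. a \<in> S \<Longrightarrow> c \<in> F \<Longrightarrow> pat a c = \<sigma>"
    by (rule monochromatic_biclique[of K P pat m "m * m"])
      (use assms(1,2) \<open>finite P\<close> \<open>P \<noteq> {}\<close> pat_P bound in auto)
  obtain a c where "a \<in> S" "c \<in> F"
    using SF(4,5) assms(2) by fastforce
  then have "\<sigma> \<in> P"
    using \<sigma> pat_P SF(1-3) by blast
  show ?thesis
  proof (rule that)
    show "set \<sigma> \<subseteq> {1..N}" "length \<sigma> = p+2"
      using \<open>\<sigma> \<in> P\<close> by (simp_all add: P_def)
    show "col (subdivision_path p a c k) = \<sigma> ! k" if "a \<in> S" "c \<in> F" "k \<le> Suc p" for a c k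
      using \<sigma>[OF that(1,2)] that(3) by (auto simp: pat_def simp del: upt_Suc)
  qed (fact SF)+
qed

lemma longer_subdivided_clique_in_few_parts:
  fixes G :: "'v graph" and V :: "nat \<Rightarrow> 'v set"
  assumes "finite K" "embeds (subdivision p (complete_graph K)) G"
    and cover: "verts G \<subseteq> (\<Union>i\<in>{1..N}. V i)"
    and "1 \<le> m" "m * m * (2*m)^m * N^((p+2)*(m+1)) < card K"
  obtains \<iota> S where "\<forall>k\<in>{1..p+2}. \<iota> k \<in> {1..N}" "S \<subseteq> K" "card S = m"
    "embeds (subdivision (2*p+1) (complete_graph S)) (induced G (\<Union>k\<in>{1..p+2}. V (\<iota> k)))"
proof -
  let ?X = "subdivision p (complete_graph K)"
  obtain \<phi> where \<phi>: "graph_embedding \<phi> ?X G"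
    using assms(2) by (auto simp: embeds_def)
  define part where "part v = (SOME i. i \<in> {1..N} \<and> v \<in> V i)" for v
  have part: "part v \<in> {1..N} \<and> v \<in> V (part v)" if "v \<in> verts G" for v
  proof -
    have "\<exists>i. i \<in> {1..N} \<and> v \<in> V i"
      using cover that by blast
    then show ?thesis
      unfolding part_def by (rule someI_ex)
  qed
  have col: "part (\<phi> v) \<in> {1..N}" if "v \<in> verts ?X" for v
    using part \<phi> that by (auto simp: graph_embedding_def)
  obtain \<sigma> S F where \<sigma>: "set \<sigma> \<subseteq> {1..N}" "length \<sigma> = p+2"
    and SF: "S \<subseteq> K" "F \<subseteq> K" "S \<inter> F = {}" "card S = m" "m * m < card F"
    and paths: "\<And>a c k. a \<in> S \<Longrightarrow> c \<in> F \<Longrightarrow> k \<le> Suc p \<Longrightarrow> part (\<phi> (subdivision_path p a c k)) = \<sigma> ! k"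
    using monochromatic_paths[where col = "\<lambda>v. part (\<phi> v)", OF assms(1,4,5) col] by blast
  have "\<phi> ` (paths_between p S F \<inter> verts ?X) \<subseteq> (\<Union>i\<in>set \<sigma>. V i)"
  proof (clarsimp simp: paths_between_def)
    fix a c k assume "a \<in> S" "c \<in> F" "k \<le> Suc p" "subdivision_path p a c k \<in> verts ?X"
    then show "\<exists>i\<in>set \<sigma>. \<phi> (subdivision_path p a c k) \<in> V i"
      using paths part \<phi> \<sigma>(2) by (force simp: graph_embedding_def)
  qed
  moreover have "embeds (subdivision (2*p+1) (complete_graph S)) (induced ?X (paths_between p S F))"
    using assms(1) SF by (intro embeds_subdivided_clique_in_paths_between) auto
  ultimately have "embeds (subdivision (2*p+1) (complete_graph S)) (induced G (\<Union>i\<in>set \<sigma>. V i))"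
    using SF(1) assms(1) finite_subset
    by (intro embeds_induced_trans[OF \<phi>] wf_graph_subdivision wf_graph_complete_graph) auto
  moreover have "(\<Union>i\<in>set \<sigma>. V i) = (\<Union>k\<in>{1..p+2}. V (\<sigma> ! (k - 1)))"
    using \<sigma>(2) by (simp add: set_conv_image_nth[of \<sigma>] image_image)
  moreover have "\<forall>k\<in>{1..p+2}. \<sigma> ! (k - 1) \<in> {1..N}"
    using \<sigma>(1) unfolding set_conv_image_nth[of \<sigma>] \<sigma>(2) by blast
  ultimately show ?thesis
    using that[of "\<lambda>k. \<sigma> ! (k - 1)" S] SF by simp
qed

lemma subdivided_clique_in_small_induced_subgraph:
  assumes "wf_graph H" "clique H K" "embeds (subdivision p H) G"
  obtains X where "embeds (subdivision p (complete_graph K)) (induced G X)"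
    "card K \<le> card (verts (induced G X))"
    "card (verts (induced G X)) \<le> card K * card K * (p + 1)"
proof -
  have sub: "subgraph (complete_graph K) H"
    using assms(1,2) by (rule subgraph_complete_graph_if_clique)
  then have wf: "wf_graph (complete_graph K)"
    by (simp add: subgraph_def)
  then have "finite K"
    by (simp add: wf_graph_def complete_graph_def)
  have "embeds (subdivision p (complete_graph K)) G"
    using sub assms(3) by (rule embeds_subdivision_of_subgraph)
  then obtain \<phi> where \<phi>: "graph_embedding \<phi> (subdivision p (complete_graph K)) G"
    by (auto simp: embeds_def)
  define X where "X = \<phi> ` verts (subdivision p (complete_graph K))"
  show ?thesis
  proof (rule that[of X])
    show "embeds (subdivision p (complete_graph K)) (induced G X)"
      using graph_embedding_induced_image[OF \<phi> wf_graph_subdivision[OF wf]]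
      unfolding embeds_def X_def by blast
    have "verts (induced G X) = X"
      using \<phi> unfolding X_def verts_induced graph_embedding_def by blast
    also have "card X = card (verts (subdivision p (complete_graph K)))"
      using \<phi> unfolding X_def graph_embedding_def by (simp add: card_image)
    also have "\<dots> = card K + card (edges (complete_graph K)) * p"
      using card_verts_subdivision[OF wf, of p] by (simp add: complete_graph_def)
    finally have card_eq: "card (verts (induced G X)) = card K + card (edges (complete_graph K)) * p" .
    then show "card K \<le> card (verts (induced G X))"
      by simp
    show "card (verts (induced G X)) \<le> card K * card K * (p + 1)"
      unfolding card_eq using card_edges_complete_graph[OF \<open>finite K\<close>] le_square[of "card K"]
      by (simp add: algebra_simps add_mono)
  qed
qed

lemma clique_number_bounded_if_decomposable:
  assumes "hereditary C" "subpoly f" "has_decomposition P C f (p+2) D" "nowhere_dense D"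
  obtains s where "\<And>G H. G \<in> C \<Longrightarrow> wf_graph H \<Longrightarrow> embeds (subdivision p H) G
    \<Longrightarrow> clique_number H \<le> s"
proof -
  obtain g where g: "\<And>q H G. G \<in> D \<Longrightarrow> wf_graph H \<Longrightarrow> embeds (subdivision q H) G
      \<Longrightarrow> clique_number H \<le> g q"
    using assms(4) by (auto simp: nowhere_dense_iff_embeds)
  define m where "m = Suc (g (2*p+1))"
  define c where "c = m * m * (2*m)^m"
  obtain n0 where n0: "\<And>n t N. n0 \<le> n \<Longrightarrow> n \<le> t * t * (p + 1) \<Longrightarrow> c^3 * (p + 1) < t \<Longrightarrow> N \<le> f n
      \<Longrightarrow> c * N^((p+2)*(m+1)) < t"
    using mult_pow_less_if_subpoly[OF assms(2), of "(p+2)*(m+1)"] by auto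
  show ?thesis
  proof (rule that[of "max n0 (c^3 * (p+1))"], rule ccontr)
    fix G H assume G: "G \<in> C" and H: "wf_graph H" "embeds (subdivision p H) G"
      and "\<not> clique_number H \<le> max n0 (c^3 * (p+1))"
    moreover obtain K where K: "clique H K" "card K = clique_number H"
      using clique_number_attained[OF H(1)] .
    ultimately have t: "n0 < card K" "c^3 * (p+1) < card K"
      by auto
    have "finite K"
      using K(1) H(1) by (auto simp: clique_def wf_graph_def intro: finite_subset)
    obtain X where X: "embeds (subdivision p (complete_graph K)) (induced G X)"
      "card K \<le> card (verts (induced G X))" "card (verts (induced G X)) \<le> card K * card K * (p + 1)"
      using subdivided_clique_in_small_induced_subgraph[OF H(1) K(1) H(2)] .
    have "induced G X \<in> C"
      using assms(1) G by (simp add: hereditary_def)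
    then obtain N V where N: "N \<le> f (card (verts (induced G X)))"
      and cover: "(\<Union>i\<in>{1..N}. V i) = verts (induced G X)"
      and parts: "\<And>\<iota>. \<forall>k\<in>{1..p+2}. \<iota> k \<in> {1..N} \<Longrightarrow>
        induced (induced G X) (\<Union>k\<in>{1..p+2}. V (\<iota> k)) \<in> D"
      using assms(3) unfolding has_decomposition_def by blast
    have "c * N^((p+2)*(m+1)) < card K"
      using n0[OF _ X(3) t(2) N] t(1) X(2) by linarith
    then obtain \<iota> S where "\<forall>k\<in>{1..p+2}. \<iota> k \<in> {1..N}" "S \<subseteq> K" "card S = m"
      "embeds (subdivision (2*p+1) (complete_graph S)) (induced (induced G X) (\<Union>k\<in>{1..p+2}. V (\<iota> k)))"
      using longer_subdivided_clique_in_few_parts[OF \<open>finite K\<close> X(1), where N = N and V = V and m = m] cover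
      by (auto simp: c_def m_def)
    moreover from this have "finite S"
      using \<open>finite K\<close> finite_subset by blast
    ultimately have "clique_number (complete_graph S) \<le> g (2*p+1)"
      using g parts wf_graph_complete_graph by blast
    then show False
      using clique_number_complete_graph[OF \<open>finite S\<close>] \<open>card S = m\<close> by (simp add: m_def)
  qed
qed

lemma nowhere_dense_if_in_star:
  assumes "C \<in> star {C. hereditary C \<and> nowhere_dense C}"
  shows "nowhere_dense C"
proof -
  have "\<exists>s. \<forall>G H. G \<in> C \<longrightarrow> wf_graph H \<longrightarrow> embeds (subdivision p H) G \<longrightarrow> clique_number H \<le> s"
    for p
  proof -
    have "\<forall>q>0. \<exists>f D. mono f \<and> subpoly f \<and> has_decomposition {C. hereditary C \<and> nowhere_dense C} C f q D"
      using assms by (simp add: star_def)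
    then obtain f D where "subpoly f" "has_decomposition {C. hereditary C \<and> nowhere_dense C} C f (p+2) D"
      by (metis add_gr_0 zero_less_numeral)
    moreover from this have "nowhere_dense D"
      by (simp add: has_decomposition_def)
    moreover have "hereditary C"
      using assms by (simp add: star_def)
    ultimately obtain s where "\<And>G H. G \<in> C \<Longrightarrow> wf_graph H \<Longrightarrow> embeds (subdivision p H) G
        \<Longrightarrow> clique_number H \<le> s"
      using clique_number_bounded_if_decomposable by blast
    then show ?thesis
      by blast
  qed
  then show ?thesis
    unfolding nowhere_dense_iff_embeds by metis
qed

lemma subpoly_const_1: "subpoly (\<lambda>_. 1)"
  unfolding subpoly_def
proof (intro allI impI)
  fix \<epsilon> :: real assume "\<epsilon> > 0"
  show "\<forall>\<^sub>F n in at_top. real 1 \<le> real n powr \<epsilon>"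
    using eventually_ge_at_top[of "1::nat"]
    by eventually_elim (simp add: ge_one_powr_ge_zero \<open>\<epsilon> > 0\<close> less_imp_le)
qed

lemma in_star_if_nowhere_dense:
  assumes "hereditary C" "nowhere_dense C"
  shows "C \<in> star {C. hereditary C \<and> nowhere_dense C}"
  unfolding star_def
proof (intro CollectI conjI allI impI assms(1))
  fix p :: nat assume "p > 0"
  have "has_decomposition {C. hereditary C \<and> nowhere_dense C} C (\<lambda>_. 1) p C"
    unfolding has_decomposition_def
  proof (intro conjI ballI)
    show "C \<in> {C. hereditary C \<and> nowhere_dense C}"
      using assms by simp
    fix G assume "G \<in> C"
    then have wf: "wf_graph G"
      using assms(1) by (auto simp: hereditary_def graph_class_def)
    show "\<exists>(N::nat) (V::nat \<Rightarrow> nat set). N \<le> 1 \<and> (\<Union>i\<in>{1..N}. V i) = verts G \<and>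
        (\<forall>i\<in>{1..N}. \<forall>j\<in>{1..N}. i \<noteq> j \<longrightarrow> V i \<inter> V j = {}) \<and>
        (\<forall>\<iota>. (\<forall>k\<in>{1..p}. \<iota> k \<in> {1..N}) \<longrightarrow> induced G (\<Union>k\<in>{1..p}. V (\<iota> k)) \<in> C)"
    proof (rule exI[of _ "1::nat"], rule exI[of _ "\<lambda>_::nat. verts G"], intro conjI allI impI)
      fix \<iota> :: "nat \<Rightarrow> nat"
      have "(\<Union>k\<in>{1..p}. verts G) = verts G"
        using \<open>p > 0\<close> by auto
      then show "induced G (\<Union>k\<in>{1..p}. verts G) \<in> C"
        using induced_verts[OF wf] \<open>G \<in> C\<close> by simp
    qed auto
  qed
  then show "\<exists>f D. mono f \<and> subpoly f \<and> has_decomposition {C. hereditary C \<and> nowhere_dense C} C f p D"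
    using subpoly_const_1 by (intro exI[of _ "\<lambda>_. 1"] exI[of _ C]) (simp add: mono_def)
qed

lemma hereditary_property_nowhere_dense: "hereditary_property {C. hereditary C \<and> nowhere_dense C}"
  unfolding hereditary_property_def nowhere_dense_def by blast

theorem mainTheorem6:
  shows "decomposition_horizon {C. hereditary C \<and> nowhere_dense C}"
  unfolding decomposition_horizon_def
proof
  show "hereditary_property {C. hereditary C \<and> nowhere_dense C}"
    by (rule hereditary_property_nowhere_dense)
  show "star {C. hereditary C \<and> nowhere_dense C} = {C. hereditary C \<and> nowhere_dense C}"
    using nowhere_dense_if_in_star in_star_if_nowhere_dense by (auto simp: star_def)
qed

end
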